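(* There exists a family $\mathcal{E}\subset\mathcal{T}$ with $|\mathcal{E}|=\mathfrak{c}$ such that each space $(\mathbb{R},\tau)$, $\tau\in\mathcal{E}$, is connected, separable and completely metrizable, and the spaces $(\mathbb{R},\tau)$, $\tau\in\mathcal{E}$, are incomparable.
   Context: $\eta$ denotes the Euclidean topology on $\mathbb{R}$; $\mathcal{T}$ is the family of all topologies on $\mathbb{R}$ finer than $\eta$. Topological spaces $X_i$ ($i\in I$) are incomparable if, for all $i,j\in I$, whenever $X_i$ is homeomorphic to a subspace $S_j$ of $X_j$, then $i=j$ and $S_j=X_j$. $\mathfrak{c}=2^{\aleph_0}$. *)

theory Defs
  imports "HOL-Analysis.Analysis" "HOL-Library.Equipollence"
begin

definition finer_than_euclidean :: "real topology \<Rightarrow> bool" where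
  "finer_than_euclidean \<tau> \<longleftrightarrow> topspace \<tau> = UNIV \<and>
     (\<forall>U. openin euclideanreal U \<longrightarrow> openin \<tau> U)"

definition incomparable_family :: "'i set \<Rightarrow> ('i \<Rightarrow> 'a topology) \<Rightarrow> bool" where
  "incomparable_family I X \<longleftrightarrow>
     (\<forall>i\<in>I. \<forall>j\<in>I. \<forall>S. S \<subseteq> topspace (X j) \<and> X i homeomorphic_space subtopology (X j) S
        \<longrightarrow> i = j \<and> S = topspace (X j))"

end

(* Each topology is pulled back from R^3 along a curve x \<mapsto> (x, u x, v x) that is continuous
   off the integers and oscillates like sin (pi / (x - n)) at prescribed integers n, from the left
   or from the right.  Being homeomorphic to its curve, a G_delta subset of R^3, each space is
   separable and completely metrizable; it is connected since each integer lies in the closure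
   of the adjacent open cells.

   Whether x is a limit of itself from the left (right) in the new topology detects oscillation
   to the left (right) of x.  An embedding between two such spaces is strictly monotone, since
   the spaces are connected and finer than the Euclidean line, so it preserves or swaps these
   one-sided properties.  Every integer oscillates on some side and 0 is the only one oscillating
   on both, so the embedding maps integers onto integers and fixes 0; hence it is +-id on the
   integers, it is onto, and it preserves the oscillation pattern, which encodes an arbitrary
   set of naturals. *)

theory Submission
  imports Defs "HOL-Real_Asymp.Real_Asymp"
begin

section \<open>Homeomorphic embeddings on the real line\<close>

lemma limitin_id_homeomorphic_map_iff:
  assumes f: "homeomorphic_map X (subtopology Y S) f" and x: "x \<in> topspace X"
    and F: "eventually (\<lambda>y. y \<in> topspace X) F"
  shows "limitin X id x F \<longleftrightarrow> limitin Y id (f x) (filtermap f F)"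
proof -
  obtain g where maps: "homeomorphic_maps X (subtopology Y S) f g"
    using f homeomorphic_map_maps by blast
  have fX: "f y \<in> S" if "y \<in> topspace X" for y
    using maps that by (auto simp: homeomorphic_maps_def continuous_map_def)
  have "limitin Y id (f x) (filtermap f F) \<longleftrightarrow> limitin Y f (f x) F"
    by (simp add: limitin_def eventually_filtermap)
  also have "\<dots> \<longleftrightarrow> limitin (subtopology Y S) f (f x) F"
    using x F fX by (auto simp: limitin_subtopology elim: eventually_mono)
  also have "\<dots> \<longleftrightarrow> limitin X id x F"
  proof
    assume "limitin (subtopology Y S) f (f x) F"
    then have "limitin X (g \<circ> f) (g (f x)) F"
      using maps continuous_map_limit by (auto simp: homeomorphic_maps_def)
    moreover have "eventually (\<lambda>y. (g \<circ> f) y = id y) F"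
      using F maps by (auto simp: homeomorphic_maps_def elim: eventually_mono)
    moreover have "g (f x) = x"
      using x maps by (simp add: homeomorphic_maps_def)
    ultimately show "limitin X id x F"
      using limitin_transform_eventually by metis
  next
    assume "limitin X id x F"
    then show "limitin (subtopology Y S) f (f x) F"
      using maps continuous_map_limit[of X "subtopology Y S" f id x F]
      by (auto simp: homeomorphic_maps_def)
  qed
  finally show ?thesis ..
qed

lemma filtermap_at_left_strict_mono:
  fixes f :: "real \<Rightarrow> real"
  assumes f: "strict_mono f" and I: "is_interval (range f)"
  shows "filtermap f (at_left x) = at_left (f x)"
proof (rule filter_eqI)
  fix P
  have less: "f a < f b \<longleftrightarrow> a < b" for a b
    using f by (simp add: strict_mono_less)
  have onto: "\<exists>y. z = f y" if "f a \<le> z" "z \<le> f b" for a b z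
    using I that unfolding is_interval_1 by blast
  show "eventually P (filtermap f (at_left x)) \<longleftrightarrow> eventually P (at_left (f x))"
    unfolding eventually_filtermap eventually_at_left_field
  proof
    assume "\<exists>b<x. \<forall>y>b. y < x \<longrightarrow> P (f y)"
    then obtain b where b: "b < x" "\<And>y. b < y \<Longrightarrow> y < x \<Longrightarrow> P (f y)" by blast
    show "\<exists>b<f x. \<forall>z>b. z < f x \<longrightarrow> P z"
    proof (intro exI conjI allI impI)
      fix z assume "f b < z" "z < f x"
      then obtain y where "z = f y" using onto[of b z x] by auto
      then show "P z" using b \<open>f b < z\<close> \<open>z < f x\<close> less by auto
    qed (use b less in auto)
  next
    assume "\<exists>c<f x. \<forall>z>c. z < f x \<longrightarrow> P z"
    then obtain c where c: "c < f x" "\<And>z. c < z \<Longrightarrow> z < f x \<Longrightarrow> P z" by blast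
    obtain y0 where y0: "max c (f (x - 1)) = f y0"
      using onto[of "x - 1" "max c (f (x - 1))" x] c less[of "x - 1" x] by auto
    show "\<exists>b<x. \<forall>y>b. y < x \<longrightarrow> P (f y)"
    proof (intro exI conjI allI impI)
      have "f (x - 1) < f x" using less by simp
      then have "f y0 < f x" using y0 c by (metis max_less_iff_conj)
      then show "y0 < x" using less by blast
      fix y assume "y0 < y" "y < x"
      then show "P (f y)" using c y0 less by (metis max.strict_boundedE)
    qed
  qed
qed

lemma filtermap_at_right_strict_mono:
  fixes f :: "real \<Rightarrow> real"
  assumes f: "strict_mono f" and I: "is_interval (range f)"
  shows "filtermap f (at_right x) = at_right (f x)"
proof -
  define g where "g t = - f (- t)" for t
  have g: "strict_mono g"
    using f by (simp add: g_def strict_mono_def)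
  have "range g = uminus ` range f"
    by (auto simp: g_def image_iff) (metis minus_minus)
  then have I': "is_interval (range g)"
    using I by (simp add: is_interval_uminusI)
  have "filtermap f (at_right x) = filtermap uminus (filtermap g (at_left (- x)))"
    by (simp add: at_right_minus filtermap_filtermap g_def)
  also have "\<dots> = at_right (f x)"
    by (simp add: filtermap_at_left_strict_mono[OF g I'] g_def at_right_minus)
  finally show ?thesis .
qed

lemma filtermap_at_left_right_strict_antimono:
  fixes f :: "real \<Rightarrow> real"
  assumes f: "strict_mono (\<lambda>t. - f t)" and I: "is_interval (range f)"
  shows "filtermap f (at_left x) = at_right (f x)" "filtermap f (at_right x) = at_left (f x)"
proof -
  have "range (\<lambda>t. - f t) = uminus ` range f"
    by (simp add: image_image)
  then have I': "is_interval (range (\<lambda>t. - f t))"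
    using I by (simp add: is_interval_uminusI)
  have flip: "filtermap f F = filtermap uminus (filtermap (\<lambda>t. - f t) F)" for F
    by (simp add: filtermap_filtermap)
  show "filtermap f (at_left x) = at_right (f x)"
    unfolding flip filtermap_at_left_strict_mono[OF f I'] by (simp add: at_right_minus)
  show "filtermap f (at_right x) = at_left (f x)"
    unfolding flip filtermap_at_right_strict_mono[OF f I'] by (simp add: at_left_minus)
qed

lemma continuous_map_id_euclideanreal:
  assumes "finer_than_euclidean X"
  shows "continuous_map X euclideanreal id"
  using assms by (simp add: finer_than_euclidean_def continuous_map_def)

lemma connectedin_imp_is_interval:
  assumes "finer_than_euclidean X" "connectedin X S"
  shows "is_interval S"
  using connectedin_continuous_map_image[OF continuous_map_id_euclideanreal[OF assms(1)] assms(2)]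
  by (simp add: is_interval_connected_1)

lemma homeomorphic_map_finer_than_euclidean:
  assumes X: "finer_than_euclidean X" and Y: "finer_than_euclidean Y"
    and conn: "connected_space X" and f: "homeomorphic_map X (subtopology Y S) f"
  shows "range f = S" "is_interval S" "strict_mono f \<or> strict_mono (\<lambda>t. - f t)"
proof -
  have top: "topspace X = UNIV" "topspace Y = UNIV"
    using X Y by (simp_all add: finer_than_euclidean_def)
  show rng: "range f = S"
    using homeomorphic_imp_surjective_map[OF f] top by simp
  have inj: "inj f"
    using homeomorphic_imp_injective_map[OF f] top by simp
  have cont: "continuous_map X euclideanreal f"
    using continuous_map_compose[OF _ continuous_map_id_euclideanreal[OF Y]]
      homeomorphic_imp_continuous_map[OF f]
    by (auto simp: continuous_map_in_subtopology)
  have "connectedin X (topspace X)"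
    using conn by (simp add: connectedin_topspace)
  from connectedin_continuous_map_image[OF cont this] show "is_interval S"
    using top rng
    by (simp add: is_interval_connected_1)
  have "monotone_map X euclideanreal f"
    using inj top by (intro injective_imp_monotone_map) auto
  then have "connectedin X {x. f x \<in> I}" if "is_interval I" for I
    using monotone_map_into_euclideanreal[OF conn cont] that top by simp
  then have "is_interval {x. x \<in> UNIV \<and> f x \<in> I}" if "is_interval I" for I
    using connectedin_imp_is_interval[OF X] that by simp
  then have "mono f \<or> antimono f"
    using monotone_map_euclideanreal_alt[of UNIV f] by simp
  then show "strict_mono f \<or> strict_mono (\<lambda>t. - f t)"
  proof
    assume "mono f"
    then show ?thesis using inj by (simp add: strict_mono_iff_mono)
  next
    assume "antimono f"
    then have "mono (\<lambda>t. - f t)" by (simp add: monotone_def)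
    moreover have "inj (\<lambda>t. - f t)" using inj by (simp add: inj_def)
    ultimately show ?thesis by (simp add: strict_mono_iff_mono)
  qed
qed

lemma is_interval_Ints_subset_imp_UNIV:
  assumes "is_interval S" "\<int> \<subseteq> S"
  shows "S = (UNIV :: real set)"
proof -
  have "x \<in> S" for x
  proof -
    have "of_int \<lfloor>x\<rfloor> \<in> S" "of_int \<lfloor>x\<rfloor> + 1 \<in> S"
      using assms(2) by (auto intro: Ints_add)
    then show ?thesis
      using assms(1) of_int_floor_le[of x] real_of_int_floor_add_one_ge[of x]
      unfolding is_interval_1 by meson
  qed
  then show ?thesis by blast
qed

lemma strict_mono_Ints_succ:
  fixes h :: "real \<Rightarrow> real"
  assumes h: "strict_mono h" and ints: "\<And>t. h t \<in> \<int> \<longleftrightarrow> t \<in> \<int>"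
    and I: "is_interval (range h)"
  shows "h (of_int m + 1) = h (of_int m) + 1"
proof -
  have less: "h a < h b \<longleftrightarrow> a < b" for a b
    using h by (simp add: strict_mono_less)
  obtain p q where p: "h (of_int m) = of_int p" and q: "h (of_int m + 1) = of_int q"
    using ints[of "of_int m"] ints[of "of_int m + 1"] by (auto elim!: Ints_cases)
  have "p < q"
    using less[of "of_int m" "of_int m + 1"] p q by simp
  moreover have "\<not> p + 1 < q"
  proof
    assume "p + 1 < q"
    then have "of_int (p + 1) \<in> range h"
      using I p q rangeI unfolding is_interval_1 by (metis of_int_le_iff less_imp_le less_add_one)
    then obtain y where y: "h y = of_int (p + 1)"
      by auto
    then obtain z where z: "y = of_int z"
      using ints[of y] by (auto elim: Ints_cases)
    have "of_int m < y" "y < of_int m + 1"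
      using less[of "of_int m" y] less[of y "of_int m + 1"] y p q \<open>p + 1 < q\<close> by simp_all
    then have "m < z" "z < m + 1"
      unfolding z by linarith+
    then show False
      by linarith
  qed
  ultimately show ?thesis
    using p q by simp
qed

lemma strict_mono_fixes_Ints:
  fixes h :: "real \<Rightarrow> real"
  assumes h: "strict_mono h" and ints: "\<And>t. h t \<in> \<int> \<longleftrightarrow> t \<in> \<int>"
    and I: "is_interval (range h)" and h0: "h 0 = 0"
  shows "h (of_int n) = of_int n"
proof (induction n rule: int_induct[where k = 0])
  case base
  show ?case using h0 by simp
next
  case (step1 i)
  then show ?case
    using strict_mono_Ints_succ[OF h ints I, of i] by simp
next
  case (step2 i)
  then show ?case
    using strict_mono_Ints_succ[OF h ints I, of "i - 1"] by simp
qed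

section \<open>The oscillating curves\<close>

definition osc :: "int set \<Rightarrow> int \<Rightarrow> real \<Rightarrow> real" where
  "osc N n t = (if n \<in> N then sin (pi / t) else 0)"

text \<open>On the cell \<open>(n, n + 1)\<close> the second coordinate oscillates near \<open>n\<close> iff \<open>n \<in> R\<close>, and the
  third near \<open>n + 1\<close> iff \<open>n + 1 \<in> L\<close>.  At the integers both vanish, by the conventions
  \<open>pi / 0 = 0\<close> and \<open>sin pi = 0\<close>.\<close>

definition osc_curve :: "int set \<Rightarrow> int set \<Rightarrow> real \<Rightarrow> real \<times> real \<times> real" where
  "osc_curve L R x =
     (x, osc R \<lfloor>x\<rfloor> (x - of_int \<lfloor>x\<rfloor>), osc L (\<lfloor>x\<rfloor> + 1) (of_int \<lfloor>x\<rfloor> + 1 - x))"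

definition osc_topology :: "int set \<Rightarrow> int set \<Rightarrow> real topology" where
  "osc_topology L R = pullback_topology UNIV (osc_curve L R) euclidean"

lemma isCont_osc: "t \<noteq> 0 \<Longrightarrow> isCont (osc N n) t"
  by (cases "n \<in> N") (auto simp: osc_def [abs_def] intro!: continuous_intros)

lemma osc_1 [simp]: "osc N n 1 = 0"
  by (simp add: osc_def)

lemma osc_inverse_nat [simp]: "osc N n (1 / real k) = 0"
  by (simp add: osc_def)

lemma osc_curve_cell:
  assumes "of_int n < y" "y < of_int n + 1"
  shows "osc_curve L R y = (y, osc R n (y - of_int n), osc L (n + 1) (of_int n + 1 - y))"
proof -
  have "\<lfloor>y\<rfloor> = n" using assms by (simp add: floor_eq_iff)
  then show ?thesis by (simp add: osc_curve_def)
qed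

lemma osc_curve_of_int [simp]: "osc_curve L R (of_int n) = (of_int n, 0, 0)"
  by (simp add: osc_curve_def osc_def)

lemma topspace_osc_topology [simp]: "topspace (osc_topology L R) = UNIV"
  by (simp add: osc_topology_def topspace_pullback_topology)

lemma openin_osc_topology:
  "openin (osc_topology L R) U \<longleftrightarrow> (\<exists>V. open V \<and> U = osc_curve L R -` V)"
  by (simp add: osc_topology_def openin_pullback_topology)

lemma limitin_osc_topology:
  "limitin (osc_topology L R) g x F \<longleftrightarrow> ((osc_curve L R \<circ> g) \<longlongrightarrow> osc_curve L R x) F"
  by (auto simp: limitin_def tendsto_def openin_osc_topology)

lemma finer_than_euclidean_osc_topology: "finer_than_euclidean (osc_topology L R)"
  unfolding finer_than_euclidean_def
proof (intro conjI allI impI)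
  fix U assume "openin euclideanreal U"
  then have "open (U \<times> (UNIV :: (real \<times> real) set))" by (simp add: open_Times)
  moreover have "U = osc_curve L R -` (U \<times> UNIV)" by (auto simp: osc_curve_def)
  ultimately show "openin (osc_topology L R) U" unfolding openin_osc_topology by blast
qed simp

lemma homeomorphic_map_osc_curve:
  "homeomorphic_map (osc_topology L R) (top_of_set (range (osc_curve L R))) (osc_curve L R)"
proof -
  have "continuous_map (osc_topology L R) euclidean (osc_curve L R)"
    unfolding osc_topology_def using continuous_map_pullback[of euclidean euclidean id] by simp
  moreover have "continuous_map (top_of_set (range (osc_curve L R))) (osc_topology L R) fst"
    unfolding osc_topology_def
    by (rule continuous_map_pullback', rule continuous_map_eq[OF continuous_map_id_subt])
       (auto simp: osc_curve_def)
  ultimately have "homeomorphic_maps (osc_topology L R) (top_of_set (range (osc_curve L R)))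
      (osc_curve L R) fst"
    by (auto simp: homeomorphic_maps_def continuous_map_in_subtopology osc_curve_def)
  then show ?thesis
    using homeomorphic_map_maps by blast
qed

lemma continuous_on_osc_curve_cell:
  "continuous_on {of_int n <..< of_int n + 1} (osc_curve L R)"
proof -
  have "continuous_on {of_int n <..< of_int n + 1}
      (\<lambda>y. (y, osc R n (y - of_int n), osc L (n + 1) (of_int n + 1 - y)))"
    by (cases "n \<in> R"; cases "n + 1 \<in> L") (auto simp: osc_def intro!: continuous_intros)
  then show ?thesis
    by (rule continuous_on_cong[THEN iffD1, rotated 2]) (auto simp: osc_curve_cell)
qed

lemma isCont_osc_curve:
  assumes "x \<notin> \<int>"
  shows "isCont (osc_curve L R) x"
proof -
  have "of_int \<lfloor>x\<rfloor> \<noteq> x" using assms by (metis Ints_of_int)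
  then have "x \<in> {of_int \<lfloor>x\<rfloor> <..< of_int \<lfloor>x\<rfloor> + 1}"
    using of_int_floor_le[of x] real_of_int_floor_add_one_gt[of x] by (auto simp: order_less_le)
  then show ?thesis
    using continuous_on_osc_curve_cell continuous_on_eq_continuous_at open_greaterThanLessThan
    by blast
qed

section \<open>One-sided convergence\<close>

lemma tendsto_Pair_iff:
  "((\<lambda>x. (f x, g x)) \<longlongrightarrow> (a, b)) F \<longleftrightarrow> (f \<longlongrightarrow> a) F \<and> (g \<longlongrightarrow> b) F"
  using tendsto_fst[of "\<lambda>x. (f x, g x)" "(a, b)" F] tendsto_snd[of "\<lambda>x. (f x, g x)" "(a, b)" F]
  by (auto intro: tendsto_Pair)

lemma sin_pi_div_not_tendsto_0: "\<not> ((\<lambda>t. sin (pi / t)) \<longlongrightarrow> 0) (at_right 0)"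
proof
  assume lim: "((\<lambda>t. sin (pi / t)) \<longlongrightarrow> 0) (at_right 0)"
  define t where "t k = 2 / (4 * real k + 1)" for k
  have "t \<longlonglongrightarrow> 0"
    unfolding t_def by real_asymp
  then have "filterlim t (at_right 0) sequentially"
    by (rule tendsto_imp_filterlim_at_right) (simp add: t_def)
  from filterlim_compose[OF lim this] have "(\<lambda>k. sin (pi / t k)) \<longlonglongrightarrow> 0" .
  moreover have "sin (pi / t k) = 1" for k
  proof -
    have "pi / t k = pi / 2 + 2 * real k * pi" by (simp add: t_def field_simps)
    then show ?thesis by (simp only: sin_add sin_2npi cos_2npi) simp
  qed
  ultimately show False
    by (simp add: LIMSEQ_const_iff)
qed

lemma tendsto_osc_at_right_0_iff: "(osc N n \<longlongrightarrow> 0) (at_right 0) \<longleftrightarrow> n \<notin> N"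
  using sin_pi_div_not_tendsto_0 by (auto simp: osc_def [abs_def])

lemma tendsto_osc_curve_at_left_of_int_iff:
  "(osc_curve L R \<longlongrightarrow> osc_curve L R (of_int n)) (at_left (of_int n)) \<longleftrightarrow> n \<notin> L"
proof -
  let ?u = "\<lambda>y. osc R (n - 1) (y - of_int (n - 1))"
  have "isCont ?u (of_int n)"
    by (rule isCont_o2[where f = "\<lambda>y. y - of_int (n - 1)", OF _ isCont_osc]) auto
  then have u: "(?u \<longlongrightarrow> 0) (at_left (of_int n))"
    unfolding isCont_def by (rule tendsto_mono[OF at_le[OF subset_UNIV], THEN tendsto_eq_rhs]) simp
  have "eventually (\<lambda>y. y \<in> {of_int (n - 1) <..< of_int n}) (at_left (real_of_int n))"
    by (rule eventually_at_left_real) simp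
  then have "eventually (\<lambda>y. osc_curve L R y = (y, ?u y, osc L n (of_int n - y))) (at_left (of_int n))"
  proof (rule eventually_mono)
    fix y assume "y \<in> {of_int (n - 1) <..< real_of_int n}"
    then show "osc_curve L R y = (y, ?u y, osc L n (of_int n - y))"
      using osc_curve_cell[of "n - 1" y] by simp
  qed
  then have "(osc_curve L R \<longlongrightarrow> osc_curve L R (of_int n)) (at_left (of_int n)) \<longleftrightarrow>
      ((\<lambda>y. osc L n (of_int n - y)) \<longlongrightarrow> 0) (at_left (of_int n))"
    using u by (simp add: filterlim_cong[OF refl refl] tendsto_Pair_iff tendsto_ident_at)
  also have "\<dots> \<longleftrightarrow> (osc L n \<longlongrightarrow> 0) (at_right 0)"
    by (simp add: at_left_minus at_right_to_0[of "- of_int n"] filterlim_filtermap)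
  finally show ?thesis by (simp add: tendsto_osc_at_right_0_iff)
qed

lemma tendsto_osc_curve_at_right_of_int_iff:
  "(osc_curve L R \<longlongrightarrow> osc_curve L R (of_int n)) (at_right (of_int n)) \<longleftrightarrow> n \<notin> R"
proof -
  let ?v = "\<lambda>y. osc L (n + 1) (of_int n + 1 - y)"
  have "isCont ?v (of_int n)"
    by (rule isCont_o2[where f = "\<lambda>y. of_int n + 1 - y", OF _ isCont_osc]) auto
  then have v: "(?v \<longlongrightarrow> 0) (at_right (of_int n))"
    unfolding isCont_def by (rule tendsto_mono[OF at_le[OF subset_UNIV], THEN tendsto_eq_rhs]) simp
  have "eventually (\<lambda>y. y \<in> {of_int n <..< of_int n + 1}) (at_right (real_of_int n))"
    by (rule eventually_at_right_real) simp
  then have "eventually (\<lambda>y. osc_curve L R y = (y, osc R n (y - of_int n), ?v y)) (at_right (of_int n))"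
    by (rule eventually_mono) (simp add: osc_curve_cell)
  then have "(osc_curve L R \<longlongrightarrow> osc_curve L R (of_int n)) (at_right (of_int n)) \<longleftrightarrow>
      ((\<lambda>y. osc R n (y - of_int n)) \<longlongrightarrow> 0) (at_right (of_int n))"
    using v by (simp add: filterlim_cong[OF refl refl] tendsto_Pair_iff tendsto_ident_at)
  also have "\<dots> \<longleftrightarrow> (osc R n \<longlongrightarrow> 0) (at_right 0)"
    by (simp add: at_right_to_0[of "of_int n"] filterlim_filtermap)
  finally show ?thesis by (simp add: tendsto_osc_at_right_0_iff)
qed

lemma limitin_osc_topology_at_left_iff:
  "limitin (osc_topology L R) id x (at_left x) \<longleftrightarrow> x \<notin> real_of_int ` L"
proof (cases "x \<in> \<int>")
  case True
  then obtain n where "x = of_int n"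
    by (auto elim: Ints_cases)
  then show ?thesis
    using tendsto_osc_curve_at_left_of_int_iff[of L R n] by (simp add: limitin_osc_topology image_iff)
next
  case False
  then show ?thesis
    using isCont_osc_curve[OF False]
    by (auto simp: limitin_osc_topology isCont_def tendsto_mono[OF at_le[OF subset_UNIV]])
qed

lemma limitin_osc_topology_at_right_iff:
  "limitin (osc_topology L R) id x (at_right x) \<longleftrightarrow> x \<notin> real_of_int ` R"
proof (cases "x \<in> \<int>")
  case True
  then obtain n where "x = of_int n"
    by (auto elim: Ints_cases)
  then show ?thesis
    using tendsto_osc_curve_at_right_of_int_iff[of L R n] by (simp add: limitin_osc_topology image_iff)
next
  case False
  then show ?thesis
    using isCont_osc_curve[OF False]
    by (auto simp: limitin_osc_topology isCont_def tendsto_mono[OF at_le[OF subset_UNIV]])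
qed

section \<open>Connectedness, separability and complete metrizability\<close>

lemma limitin_in_closure_of:
  assumes "limitin X f l F" "eventually (\<lambda>x. f x \<in> S) F" "\<not> trivial_limit F"
    and "S \<subseteq> topspace X"
  shows "l \<in> X closure_of S"
  using assms closure_of_subset[of S X]
  by (intro limitin_closedin[of X f l F]) (auto elim: eventually_mono)

lemma cell_endpoints_in_closure_of:
  "of_int n \<in> osc_topology L R closure_of {of_int n <..< of_int n + 1}"
  "of_int n + 1 \<in> osc_topology L R closure_of {of_int n <..< of_int n + 1}"
proof -
  define d where "d k = 1 / real (k + 2)" for k
  have d: "0 < d k" "d k < 1" for k
    by (auto simp: d_def)
  have "d \<longlonglongrightarrow> 0"
    unfolding d_def by real_asymp
  let ?u = "\<lambda>y. osc R n (y - of_int n)" and ?v = "\<lambda>y. osc L (n + 1) (of_int n + 1 - y)"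
  have zero: "osc N m (d k) = 0" for N m k
    unfolding d_def using osc_inverse_nat[of N m "k + 2"] by simp
  \<comment> \<open>the sequences run through zeros of the oscillating component\<close>
  have left: "osc_curve L R (of_int n + d k) = (of_int n + d k, 0, ?v (of_int n + d k))" for k
    using osc_curve_cell[of n "of_int n + d k"] d[of k] zero by simp
  have right: "osc_curve L R (of_int n + 1 - d k) = (of_int n + 1 - d k, ?u (of_int n + 1 - d k), 0)"
    for k
    using osc_curve_cell[of n "of_int n + 1 - d k"] d[of k] zero by simp
  have to_left: "(\<lambda>k. of_int n + d k) \<longlonglongrightarrow> of_int n"
    using tendsto_add[OF tendsto_const \<open>d \<longlonglongrightarrow> 0\<close>] by simp
  have to_right: "(\<lambda>k. of_int n + 1 - d k) \<longlonglongrightarrow> of_int n + 1"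
    using tendsto_diff[OF tendsto_const \<open>d \<longlonglongrightarrow> 0\<close>] by simp
  have "isCont ?v (of_int n)"
    by (rule isCont_o2[where f = "\<lambda>y. of_int n + 1 - y", OF _ isCont_osc]) auto
  from isCont_tendsto_compose[OF this to_left] have v: "(\<lambda>k. ?v (of_int n + d k)) \<longlonglongrightarrow> 0"
    by simp
  have "isCont ?u (of_int n + 1)"
    by (rule isCont_o2[where f = "\<lambda>y. y - of_int n", OF _ isCont_osc]) auto
  from isCont_tendsto_compose[OF this to_right] have u: "(\<lambda>k. ?u (of_int n + 1 - d k)) \<longlonglongrightarrow> 0"
    by simp
  from to_left to_right u v
  have "limitin (osc_topology L R) (\<lambda>k. of_int n + d k) (of_int n) sequentially"
    "limitin (osc_topology L R) (\<lambda>k. of_int n + 1 - d k) (of_int n + 1) sequentially"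
    using osc_curve_of_int[of L R "n + 1"]
    by (simp_all add: limitin_osc_topology o_def left right tendsto_Pair_iff)
  then show "of_int n \<in> osc_topology L R closure_of {of_int n <..< of_int n + 1}"
    "of_int n + 1 \<in> osc_topology L R closure_of {of_int n <..< of_int n + 1}"
    by (auto intro!: limitin_in_closure_of simp: d)
qed

lemma connectedin_osc_topology_cell:
  "connectedin (osc_topology L R) {of_int n .. of_int n + 1}"
proof (rule connectedin_intermediate_closure_of)
  let ?C = "{of_int n <..< of_int n + 1 :: real}"
  have "continuous_map (top_of_set ?C) (osc_topology L R) id"
    unfolding osc_topology_def
    using continuous_on_osc_curve_cell[of n L R]
    by (intro continuous_map_pullback') (auto simp: continuous_map_iff_continuous)
  from connectedin_continuous_map_image[OF this]
  show "connectedin (osc_topology L R) ?C"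
    by (simp add: connectedin_subtopology)
  show "{of_int n .. of_int n + 1} \<subseteq> osc_topology L R closure_of ?C"
    using cell_endpoints_in_closure_of closure_of_subset[of ?C "osc_topology L R"]
    by (auto simp: less_eq_real_def subset_iff)
qed auto

lemma connectedin_osc_topology_int_interval:
  assumes "m \<le> n"
  shows "connectedin (osc_topology L R) {of_int m .. of_int n}"
  using assms
proof (induction n rule: int_ge_induct)
  case base
  then show ?case by simp
next
  case (step n)
  have "{of_int m .. of_int (n + 1)} = {of_int m .. of_int n} \<union> {of_int n .. of_int n + 1 :: real}"
    using step.hyps by auto
  then show ?case
    using step.hyps by (auto intro!: connectedin_Un step.IH connectedin_osc_topology_cell)
qed

lemma connected_space_osc_topology: "connected_space (osc_topology L R)"
proof -
  have "connectedin (osc_topology L R) (\<Union>k::nat. {- real k .. real k})"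
  proof (rule connectedin_Union)
    show "connectedin (osc_topology L R) S" if "S \<in> range (\<lambda>k::nat. {- real k .. real k})" for S
      using that connectedin_osc_topology_int_interval[of "- int k" "int k" L R for k] by auto
    have "0 \<in> (\<Inter>k::nat. {- real k .. real k})"
      by simp
    then show "(\<Inter>k::nat. {- real k .. real k}) \<noteq> {}"
      by blast
  qed
  moreover have "x \<in> {- real (nat \<lceil>\<bar>x\<bar>\<rceil>) .. real (nat \<lceil>\<bar>x\<bar>\<rceil>)}" for x :: real
    using real_nat_ceiling_ge[of "\<bar>x\<bar>"] unfolding atLeastAtMost_iff by linarith
  then have "(\<Union>k::nat. {- real k .. real k}) = UNIV"
    by blast
  ultimately show ?thesis
    by (metis connectedin_topspace topspace_osc_topology)
qed

lemma second_countable_top_of_set: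
  "second_countable (top_of_set (S :: 'a::second_countable_topology set))"
proof -
  obtain \<B> :: "'a set set" where "countable \<B>" "\<And>C. C \<in> \<B> \<Longrightarrow> openin (top_of_set S) C"
    "\<And>T. openin (top_of_set S) T \<Longrightarrow> \<exists>\<U>. \<U> \<subseteq> \<B> \<and> T = \<Union>\<U>"
    by (rule subset_second_countable) blast
  then show ?thesis
    unfolding second_countable_def by (metis UnionE subset_iff Union_upper)
qed

lemma gdelta_in_graph:
  fixes g :: "'a::metric_space \<Rightarrow> 'b::metric_space"
  assumes U: "open U" and g: "continuous_on U g"
  shows "gdelta_in euclidean ((\<lambda>x. (x, g x)) ` U)"
proof -
  let ?S = "U \<times> (UNIV :: 'b set)"
  have snd: "continuous_map (top_of_set ?S) euclidean snd"
    by (simp add: continuous_map_iff_continuous continuous_on_snd continuous_on_id)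
  have "continuous_map (top_of_set ?S) euclidean (g \<circ> fst)"
    using continuous_on_compose2[OF g continuous_on_fst[OF continuous_on_id], of ?S]
    by (auto simp: continuous_map_iff_continuous o_def)
  then have "closedin (top_of_set ?S) {p \<in> topspace (top_of_set ?S). (g \<circ> fst) p = snd p}"
    using closedin_continuous_maps_eq[OF Hausdorff_space_euclidean _ snd] by blast
  moreover have "{p \<in> topspace (top_of_set ?S). (g \<circ> fst) p = snd p} = (\<lambda>x. (x, g x)) ` U"
    by auto
  ultimately have "gdelta_in (top_of_set ?S) ((\<lambda>x. (x, g x)) ` U)"
    by (metis closed_imp_gdelta_in metrizable_space_euclidean metrizable_space_subtopology)
  moreover have "gdelta_in euclidean ?S"
    using U by (simp add: open_imp_gdelta_in open_Times)
  ultimately show ?thesis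
    by (simp add: gdelta_in_gdelta_subtopology)
qed

lemma range_osc_curve:
  "range (osc_curve L R) = (\<lambda>x. (x, snd (osc_curve L R x))) ` (- \<int>) \<union> \<int> \<times> {(0, 0)}"
proof -
  let ?g = "\<lambda>x. (x, snd (osc_curve L R x))"
  have "range (osc_curve L R) = range ?g"
    by (simp add: osc_curve_def)
  also have "\<dots> = ?g ` (- \<int>) \<union> ?g ` \<int>"
    by (simp flip: image_Un)
  also have "?g ` \<int> = \<int> \<times> {(0, 0)}"
    by (force elim!: Ints_cases)
  finally show ?thesis .
qed

lemma completely_metrizable_space_osc_topology:
  "completely_metrizable_space (osc_topology L R)"
proof -
  have "continuous_on (- \<int>) (\<lambda>x. snd (osc_curve L R x))"
    by (intro continuous_at_imp_continuous_on ballI continuous_snd isCont_osc_curve) simp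
  then have "gdelta_in euclidean ((\<lambda>x. (x, snd (osc_curve L R x))) ` (- \<int>))"
    by (intro gdelta_in_graph) (simp_all add: open_Compl)
  moreover have "gdelta_in euclidean ((\<int> :: real set) \<times> {(0 :: real, 0 :: real)})"
    by (intro closed_imp_gdelta_in metrizable_space_euclidean) (simp add: closed_Times)
  ultimately have "gdelta_in euclidean (range (osc_curve L R))"
    unfolding range_osc_curve by (rule gdelta_in_Un)
  then show ?thesis
    using completely_metrizable_space_gdelta_in[OF completely_metrizable_space_euclidean]
      homeomorphic_completely_metrizable_space
        [OF homeomorphic_map_imp_homeomorphic_space[OF homeomorphic_map_osc_curve]]
    by blast
qed

lemma separable_space_osc_topology: "separable_space (osc_topology L R)"
  using second_countable_imp_separable_space[OF second_countable_top_of_set]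
    homeomorphic_separable_space
      [OF homeomorphic_map_imp_homeomorphic_space[OF homeomorphic_map_osc_curve]]
  by blast

section \<open>Embeddings between oscillation topologies\<close>

lemma osc_topology_embedding_sides:
  assumes f: "homeomorphic_map (osc_topology L R) (subtopology (osc_topology L' R') S) f"
  obtains "strict_mono f"
      "\<And>x. x \<in> real_of_int ` L \<longleftrightarrow> f x \<in> real_of_int ` L'"
      "\<And>x. x \<in> real_of_int ` R \<longleftrightarrow> f x \<in> real_of_int ` R'"
    | "strict_mono (\<lambda>t. - f t)"
      "\<And>x. x \<in> real_of_int ` L \<longleftrightarrow> f x \<in> real_of_int ` R'"
      "\<And>x. x \<in> real_of_int ` R \<longleftrightarrow> f x \<in> real_of_int ` L'"
proof -
  note embedding = homeomorphic_map_finer_than_euclidean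
    [OF finer_than_euclidean_osc_topology finer_than_euclidean_osc_topology
        connected_space_osc_topology f]
  have lim: "limitin (osc_topology L R) id x F \<longleftrightarrow>
      limitin (osc_topology L' R') id (f x) (filtermap f F)" for x F
    by (rule limitin_id_homeomorphic_map_iff[OF f]) auto
  from embedding(3) show ?thesis
  proof
    assume "strict_mono f"
    then have "filtermap f (at_left x) = at_left (f x)" "filtermap f (at_right x) = at_right (f x)"
      for x
      using embedding(1,2) filtermap_at_left_strict_mono filtermap_at_right_strict_mono by auto
    then show ?thesis
      using lim[of x "at_left x" for x] lim[of x "at_right x" for x]
      by (intro that(1)[OF \<open>strict_mono f\<close>])
        (simp_all add: limitin_osc_topology_at_left_iff limitin_osc_topology_at_right_iff)
  next
    assume "strict_mono (\<lambda>t. - f t)"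
    then have "filtermap f (at_left x) = at_right (f x)" "filtermap f (at_right x) = at_left (f x)"
      for x
      using embedding(1,2) filtermap_at_left_right_strict_antimono by auto
    then show ?thesis
      using lim[of x "at_left x" for x] lim[of x "at_right x" for x]
      by (intro that(2)[OF \<open>strict_mono (\<lambda>t. - f t)\<close>])
        (simp_all add: limitin_osc_topology_at_left_iff limitin_osc_topology_at_right_iff)
  qed
qed

lemma Ints_zero_transfer:
  assumes LR: "L \<union> R = UNIV" "L \<inter> R = {0}" and LR': "L' \<union> R' = UNIV" "L' \<inter> R' = {0}"
    and "x \<in> real_of_int ` L \<longleftrightarrow> y \<in> real_of_int ` L'" "x \<in> real_of_int ` R \<longleftrightarrow> y \<in> real_of_int ` R'"
  shows "x \<in> \<int> \<longleftrightarrow> y \<in> \<int>" "x = 0 \<longleftrightarrow> y = 0"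
proof -
  have image_of_int: "real_of_int ` M \<union> real_of_int ` N = \<int>"
    "real_of_int ` M \<inter> real_of_int ` N = {0}" if "M \<union> N = UNIV" "M \<inter> N = {0}" for M N
    using that by (simp_all add: Ints_def inj_on_def flip: image_Un image_Int)
  have "x \<in> \<int> \<longleftrightarrow> x \<in> real_of_int ` L \<or> x \<in> real_of_int ` R"
    "x = 0 \<longleftrightarrow> x \<in> real_of_int ` L \<and> x \<in> real_of_int ` R"
    "y \<in> \<int> \<longleftrightarrow> y \<in> real_of_int ` L' \<or> y \<in> real_of_int ` R'"
    "y = 0 \<longleftrightarrow> y \<in> real_of_int ` L' \<and> y \<in> real_of_int ` R'"
    using image_of_int[OF LR] image_of_int[OF LR'] by (simp_all add: set_eq_iff)
  then show "x \<in> \<int> \<longleftrightarrow> y \<in> \<int>" "x = 0 \<longleftrightarrow> y = 0"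
    using assms(5,6) by simp_all
qed

lemma osc_topology_embedding:
  assumes LR: "L \<union> R = UNIV" "L \<inter> R = {0}" and LR': "L' \<union> R' = UNIV" "L' \<inter> R' = {0}"
    and f: "homeomorphic_map (osc_topology L R) (subtopology (osc_topology L' R') S) f"
  shows "S = UNIV \<and> (L' = L \<or> R' = uminus ` L)"
proof -
  note embedding = homeomorphic_map_finer_than_euclidean
    [OF finer_than_euclidean_osc_topology finer_than_euclidean_osc_topology
        connected_space_osc_topology f]
  have of_int_mem: "real_of_int n \<in> real_of_int ` M \<longleftrightarrow> n \<in> M" for n M
    by (auto simp: image_iff)
  have onto: "S = UNIV" if "\<And>n. of_int n \<in> range f"
  proof (rule is_interval_Ints_subset_imp_UNIV)
    show "is_interval S"
      by (rule embedding(2))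
    show "\<int> \<subseteq> S"
      using that embedding(1) by (auto elim!: Ints_cases)
  qed
  from osc_topology_embedding_sides[OF f] show ?thesis
  proof cases
    case 1
    note transfer = Ints_zero_transfer[OF LR LR' 1(2,3)]
    have fixed: "f (of_int n) = of_int n" for n
      using transfer[of 0] transfer(1) embedding(1,2) by (intro strict_mono_fixes_Ints 1(1)) auto
    then have "S = UNIV"
      by (intro onto) (metis rangeI)
    moreover have "n \<in> L \<longleftrightarrow> n \<in> L'" for n
      using 1(2)[of "of_int n"] by (simp only: fixed of_int_mem)
    ultimately show ?thesis
      by blast
  next
    case 2
    have "R' \<union> L' = UNIV" "R' \<inter> L' = {0}"
      using LR' by blast+
    note transfer = Ints_zero_transfer[OF LR this 2(2,3)]
    have "range (\<lambda>t. - f t) = uminus ` S"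
      using embedding(1) by (auto simp: image_image)
    then have "- f (of_int n) = of_int n" for n
      using transfer[of 0] transfer(1) embedding(2)
      by (intro strict_mono_fixes_Ints 2(1)) (auto simp: is_interval_uminusI)
    then have reflected: "f (of_int n) = of_int (- n)" for n
      by (metis minus_minus of_int_minus)
    then have "S = UNIV"
      by (intro onto) (metis minus_minus rangeI)
    moreover have "n \<in> L \<longleftrightarrow> - n \<in> R'" for n
      using 2(2)[of "of_int n"] by (simp only: reflected of_int_mem)
    then have "R' = uminus ` L"
      by (auto simp: image_iff) (metis minus_minus)
    ultimately show ?thesis
      by blast
  qed
qed

text \<open>The integers up to 1 oscillate from the left and 0 also from the right; \<open>k + 2\<close> oscillates
  from the left if \<open>k \<in> A\<close> and from the right otherwise.  Thus -1 oscillates from the left but 1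
  not from the right, which rules out orientation-reversing embeddings.\<close>

definition code_left :: "nat set \<Rightarrow> int set" where
  "code_left A = {..1} \<union> (\<lambda>k. int k + 2) ` A"

definition code_right :: "nat set \<Rightarrow> int set" where
  "code_right A = {0} \<union> (\<lambda>k. int k + 2) ` (- A)"

definition coded_topology :: "nat set \<Rightarrow> real topology" where
  "coded_topology A = osc_topology (code_left A) (code_right A)"

lemma code_left_Un_code_right: "code_left A \<union> code_right A = UNIV"
proof -
  have "n \<in> code_left A \<union> code_right A" for n
  proof (cases "n \<le> 1")
    case False
    then have "n = int (nat (n - 2)) + 2" by simp
    then show ?thesis
      unfolding code_left_def code_right_def by (cases "nat (n - 2) \<in> A") blast+
  qed (simp add: code_left_def)
  then show ?thesis by blast
qed

lemma code_left_Int_code_right: "code_left A \<inter> code_right A = {0}"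
  by (auto simp: code_left_def code_right_def)

lemma coded_topology_embedding:
  assumes "coded_topology A homeomorphic_space subtopology (coded_topology B) S"
  shows "A = B \<and> S = UNIV"
proof -
  obtain f where "homeomorphic_map (coded_topology A) (subtopology (coded_topology B) S) f"
    using assms homeomorphic_space by blast
  from osc_topology_embedding[OF code_left_Un_code_right code_left_Int_code_right
      code_left_Un_code_right code_left_Int_code_right this[unfolded coded_topology_def]]
  have "S = UNIV" and "code_left B = code_left A \<or> code_right B = uminus ` code_left A"
    by auto
  moreover have "1 \<in> uminus ` code_left A" "1 \<notin> code_right B"
    by (force simp: code_left_def, auto simp: code_right_def)
  ultimately have "code_left B = code_left A"
    by auto
  then have "int k + 2 \<in> code_left A \<longleftrightarrow> int k + 2 \<in> code_left B" for k
    by simp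
  then have "A = B"
    by (auto simp: code_left_def image_iff)
  with \<open>S = UNIV\<close> show ?thesis by simp
qed

theorem corollary2:
  shows "\<exists>E :: real topology set.
           (\<forall>\<tau>\<in>E. finer_than_euclidean \<tau>) \<and>
           E \<approx> (UNIV :: real set) \<and>
           (\<forall>\<tau>\<in>E. connected_space \<tau> \<and> separable_space \<tau> \<and> completely_metrizable_space \<tau>) \<and>
           incomparable_family E (\<lambda>\<tau>. \<tau>)"
proof (intro exI[of _ "range coded_topology"] conjI ballI)
  have "inj coded_topology"
  proof (rule injI)
    fix A B assume "coded_topology A = coded_topology B"
    then have "coded_topology A homeomorphic_space subtopology (coded_topology B) UNIV"
      by (simp add: homeomorphic_space_refl)
    then show "A = B"
      using coded_topology_embedding by blast
  qed
  then show "range coded_topology \<approx> (UNIV :: real set)"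
    using eqpoll_trans[OF inj_on_image_eqpoll_self nat_sets_eqpoll_reals] by blast
  show "incomparable_family (range coded_topology) (\<lambda>\<tau>. \<tau>)"
    using coded_topology_embedding by (auto simp: incomparable_family_def coded_topology_def)
qed (auto simp: coded_topology_def finer_than_euclidean_osc_topology connected_space_osc_topology
       separable_space_osc_topology completely_metrizable_space_osc_topology)

end
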